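(* If $p:X\to Y$ is a covering map and $Y$ is locally connected and paracompact, then $p$ is an overlay.
   Context: A covering map $p:X\to Y$ is a continuous surjection such that every point of $Y$ has an open neighborhood $V$ with $p^{-1}(V)$ a disjoint union of open sets each mapped homeomorphically onto $V$. For a continuous map $p:X\to Y$: a slice of $p$ is an open set $U\subseteq X$ such that $p^{-1}(p(U))$ is the disjoint union of a family of open sets $U_s$ ($s\in S$), each mapped by $p$ homeomorphically onto $p(U)$, with $U=U_t$ for some $t\in S$. A covering structure of $p$ is an open cover $\mathcal S$ of $X$ by slices of $p$ such that for every $U\in\mathcal S$, $p^{-1}(p(U))$ is the disjoint union of a family $\{U_j\}_{j\in J}$ of elements of $\mathcal S$, each mapped homeomorphically onto $p(U)$. For a cover $\mathcal S$ and $x\in X$, $st(x,\mathcal S)=\bigcup\{U\in\mathcal S: x\in U\}$. An overlay structure of $p$ is a covering structure $\mathcal S$ such that $st(x,\mathcal S)$ is a slice of $p$ for every $x\in X$. The map $p$ is an overlay if it has an overlay structure. *)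

theory Defs
  imports "HOL-Analysis.Analysis"
begin

definition covering_map :: "'a topology \<Rightarrow> 'b topology \<Rightarrow> ('a \<Rightarrow> 'b) \<Rightarrow> bool" where
  "covering_map X Y p \<longleftrightarrow>
     continuous_map X Y p \<and> p ` topspace X = topspace Y \<and>
     (\<forall>y \<in> topspace Y. \<exists>V. openin Y V \<and> y \<in> V \<and>
        (\<exists>\<U>. \<Union>\<U> = {x \<in> topspace X. p x \<in> V} \<and> (\<forall>U \<in> \<U>. openin X U) \<and>
             pairwise disjnt \<U> \<and>
             (\<forall>U \<in> \<U>. homeomorphic_map (subtopology X U) (subtopology Y V) p)))"

definition slice :: "'a topology \<Rightarrow> 'b topology \<Rightarrow> ('a \<Rightarrow> 'b) \<Rightarrow> 'a set \<Rightarrow> bool" where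
  "slice X Y p U \<longleftrightarrow> openin X U \<and>
     (\<exists>\<U>. U \<in> \<U> \<and> \<Union>\<U> = {x \<in> topspace X. p x \<in> p ` U} \<and> (\<forall>W \<in> \<U>. openin X W) \<and>
          pairwise disjnt \<U> \<and>
          (\<forall>W \<in> \<U>. homeomorphic_map (subtopology X W) (subtopology Y (p ` U)) p))"

definition covering_structure :: "'a topology \<Rightarrow> 'b topology \<Rightarrow> ('a \<Rightarrow> 'b) \<Rightarrow> 'a set set \<Rightarrow> bool" where
  "covering_structure X Y p \<S> \<longleftrightarrow>
     \<Union>\<S> = topspace X \<and> (\<forall>U \<in> \<S>. slice X Y p U) \<and>
     (\<forall>U \<in> \<S>. \<exists>\<U>. \<U> \<subseteq> \<S> \<and> \<Union>\<U> = {x \<in> topspace X. p x \<in> p ` U} \<and>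
          pairwise disjnt \<U> \<and>
          (\<forall>W \<in> \<U>. homeomorphic_map (subtopology X W) (subtopology Y (p ` U)) p))"

definition star :: "'a \<Rightarrow> 'a set set \<Rightarrow> 'a set" where
  "star x \<S> = \<Union>{U \<in> \<S>. x \<in> U}"

definition overlay_structure :: "'a topology \<Rightarrow> 'b topology \<Rightarrow> ('a \<Rightarrow> 'b) \<Rightarrow> 'a set set \<Rightarrow> bool" where
  "overlay_structure X Y p \<S> \<longleftrightarrow>
     covering_structure X Y p \<S> \<and> (\<forall>x \<in> topspace X. slice X Y p (star x \<S>))"

definition overlay :: "'a topology \<Rightarrow> 'b topology \<Rightarrow> ('a \<Rightarrow> 'b) \<Rightarrow> bool" where
  "overlay X Y p \<longleftrightarrow> (\<exists>\<S>. overlay_structure X Y p \<S>)"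

text \<open>Paracompactness (Hausdorff included, Engelking convention): every open cover
  has a locally finite open refinement covering the space.\<close>
definition paracompact_space :: "'a topology \<Rightarrow> bool" where
  "paracompact_space Y \<longleftrightarrow> Hausdorff_space Y \<and>
     (\<forall>\<U>. (\<forall>U \<in> \<U>. openin Y U) \<and> \<Union>\<U> = topspace Y \<longrightarrow>
        (\<exists>\<V>. (\<forall>V \<in> \<V>. openin Y V) \<and> \<Union>\<V> = topspace Y \<and>
             (\<forall>V \<in> \<V>. \<exists>U \<in> \<U>. V \<subseteq> U) \<and> locally_finite_in Y \<V>))"

end

theory Submission
  imports Defs
begin

text \<open>
  The open sets evenly covered by \<open>p\<close> cover \<open>Y\<close>. Paracompactness yields an open refinement \<open>\<O>\<close>
  whose point stars \<open>st(y, \<O>)\<close> each lie in one evenly covered \<open>W\<^sub>y\<close>, and local connectedness lets us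
  pass to the cover \<open>\<C>\<close> by connected open subsets of members of \<open>\<O>\<close>. Each \<open>C \<in> \<C>\<close> is evenly
  covered, and all their sheets form a covering structure \<open>\<S>\<close>. A sheet through \<open>x\<close> is connected
  and lies over \<open>W\<^sub>p\<^sub>x\<close>, so it is contained in the sheet of \<open>W\<^sub>p\<^sub>x\<close> through \<open>x\<close>; hence
  \<open>st(x, \<S>)\<close> is an open subset of that sheet with open image, i.e. a slice.
\<close>

lemma paracompact_spaceE:
  assumes "paracompact_space Y" "\<And>U. U \<in> \<U> \<Longrightarrow> openin Y U" "topspace Y \<subseteq> \<Union>\<U>"
  obtains \<V> where "\<forall>V\<in>\<V>. openin Y V" "\<Union>\<V> = topspace Y" "\<forall>V\<in>\<V>. \<exists>U\<in>\<U>. V \<subseteq> U"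
    "locally_finite_in Y \<V>"
proof -
  have "\<Union>\<U> \<subseteq> topspace Y" using assms(2) openin_subset by auto
  with assms(3) have "\<Union>\<U> = topspace Y" by (rule antisym[rotated])
  then show ?thesis
    using that assms(1)[unfolded paracompact_space_def, THEN conjunct2, rule_format, of \<U>] assms(2)
    by auto
qed

lemma paracompact_space_closure_of_nbhd:
  assumes P: "paracompact_space Y" and W: "openin Y W" and y: "y \<in> W"
  shows "\<exists>N. openin Y N \<and> y \<in> N \<and> Y closure_of N \<subseteq> W"
proof -
  have H: "Hausdorff_space Y" using P by (simp add: paracompact_space_def)
  have yt: "y \<in> topspace Y" using W y openin_subset by blast
  define \<U> where "\<U> = insert W {U. openin Y U \<and> y \<notin> Y closure_of U}"
  have cover: "topspace Y \<subseteq> \<Union>\<U>"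
  proof
    fix c assume c: "c \<in> topspace Y"
    show "c \<in> \<Union>\<U>"
    proof (cases "c \<in> W")
      case False
      then have "c \<noteq> y" using y by auto
      then obtain U V where UV: "openin Y U" "openin Y V" "c \<in> U" "y \<in> V" "disjnt U V"
        using H c yt unfolding Hausdorff_space_def by blast
      then have "y \<notin> Y closure_of U"
        using openin_Int_closure_of_eq_empty[of Y V U] by (auto simp: disjnt_def)
      then show ?thesis using UV by (auto simp: \<U>_def)
    qed (auto simp: \<U>_def)
  qed
  have opens: "\<And>U. U \<in> \<U> \<Longrightarrow> openin Y U" using W by (auto simp: \<U>_def)
  obtain \<V> where \<V>: "\<forall>V\<in>\<V>. openin Y V" "\<Union>\<V> = topspace Y"
      "\<forall>V\<in>\<V>. \<exists>U\<in>\<U>. V \<subseteq> U" "locally_finite_in Y \<V>"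
    using paracompact_spaceE[OF P opens cover] by blast
  \<comment> \<open>The members of \<open>\<V>\<close> whose closure avoids \<open>y\<close> have a closed union, and the others lie in \<open>W\<close>.\<close>
  define M where "M = \<Union>{V\<in>\<V>. y \<notin> Y closure_of V}"
  have "Y closure_of M = \<Union>((\<lambda>S. Y closure_of S) ` {V\<in>\<V>. y \<notin> Y closure_of V})"
    unfolding M_def by (rule closure_of_locally_finite_Union) (rule locally_finite_in_subset[OF \<V>(4)], blast)
  then have yM: "y \<notin> Y closure_of M" by auto
  have oM: "openin Y M" unfolding M_def using \<V>(1) by auto
  define N where "N = topspace Y - Y closure_of M"
  have oN: "openin Y N" unfolding N_def by (simp add: openin_diff closedin_closure_of)
  have "N \<subseteq> topspace Y - M" using closure_of_subset[OF openin_subset[OF oM]] unfolding N_def by blast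
  then have "Y closure_of N \<subseteq> topspace Y - M"
    by (simp add: closure_of_minimal closedin_diff oM)
  also have "\<dots> \<subseteq> W"
  proof
    fix c assume c: "c \<in> topspace Y - M"
    then obtain V U where "V \<in> \<V>" "c \<in> V" "U \<in> \<U>" "V \<subseteq> U" using \<V>(2,3) by blast
    moreover from this c have "y \<in> Y closure_of V" unfolding M_def by blast
    ultimately have "y \<in> Y closure_of U" using closure_of_mono by blast
    then show "c \<in> W" using \<open>U \<in> \<U>\<close> \<open>V \<subseteq> U\<close> \<open>c \<in> V\<close> unfolding \<U>_def by blast
  qed
  finally have "Y closure_of N \<subseteq> W" .
  moreover have "y \<in> N" using yM yt unfolding N_def by blast
  ultimately show ?thesis using oN by blast
qed

lemma paracompact_space_closure_refinement:
  assumes P: "paracompact_space Y" and opens: "\<And>W. W \<in> \<W> \<Longrightarrow> openin Y W"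
    and cover: "topspace Y \<subseteq> \<Union>\<W>"
  obtains \<V> where "\<forall>V\<in>\<V>. openin Y V" "\<Union>\<V> = topspace Y" "locally_finite_in Y \<V>"
    "\<forall>V\<in>\<V>. \<exists>W\<in>\<W>. Y closure_of V \<subseteq> W"
proof -
  define \<W>' where "\<W>' = {N. openin Y N \<and> (\<exists>W\<in>\<W>. Y closure_of N \<subseteq> W)}"
  have opens': "\<And>N. N \<in> \<W>' \<Longrightarrow> openin Y N" unfolding \<W>'_def by blast
  have cover': "topspace Y \<subseteq> \<Union>\<W>'"
  proof
    fix y assume "y \<in> topspace Y"
    then obtain W where "W \<in> \<W>" "y \<in> W" using cover by blast
    then obtain N where "openin Y N" "y \<in> N" "Y closure_of N \<subseteq> W"
      using paracompact_space_closure_of_nbhd[OF P opens[OF \<open>W \<in> \<W>\<close>] \<open>y \<in> W\<close>] by blast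
    then show "y \<in> \<Union>\<W>'" unfolding \<W>'_def using \<open>W \<in> \<W>\<close> by blast
  qed
  obtain \<V> where \<V>: "\<forall>V\<in>\<V>. openin Y V" "\<Union>\<V> = topspace Y" "\<forall>V\<in>\<V>. \<exists>N\<in>\<W>'. V \<subseteq> N"
      "locally_finite_in Y \<V>"
    by (rule paracompact_spaceE[OF P opens' cover'])
  have "\<exists>W\<in>\<W>. Y closure_of V \<subseteq> W" if "V \<in> \<V>" for V
  proof -
    obtain N W where "V \<subseteq> N" "W \<in> \<W>" "Y closure_of N \<subseteq> W"
      using \<V>(3) \<open>V \<in> \<V>\<close> unfolding \<W>'_def by blast
    then show ?thesis using closure_of_mono by blast
  qed
  with \<V>(1,2,4) show thesis by (intro that) auto
qed

lemma locally_finite_closure_refinement_imp_star_refinement: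
  assumes opens: "\<And>W. W \<in> \<W> \<Longrightarrow> openin Y W"
    and \<V>: "\<forall>V\<in>\<V>. openin Y V" "\<Union>\<V> = topspace Y" "locally_finite_in Y \<V>"
    and f: "\<And>V. V \<in> \<V> \<Longrightarrow> f V \<in> \<W> \<and> Y closure_of V \<subseteq> f V"
  obtains \<O> where "\<forall>Q\<in>\<O>. openin Y Q" "\<Union>\<O> = topspace Y" "\<forall>y\<in>topspace Y. \<exists>W\<in>\<W>. star y \<O> \<subseteq> W"
proof -
  \<comment> \<open>\<open>nbhd z\<close> meets only members of \<open>\<V>\<close> whose closures contain \<open>z\<close>, and lies in all their \<open>f\<close>-images.\<close>
  define nbhd where "nbhd z = (topspace Y - \<Union>((\<lambda>V. Y closure_of V) ` {V\<in>\<V>. z \<notin> Y closure_of V}))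
        \<inter> \<Inter>(f ` {V\<in>\<V>. z \<in> Y closure_of V})" for z
  have in_closure: "\<exists>V\<in>\<V>. y \<in> Y closure_of V" if y: "y \<in> topspace Y" for y
  proof -
    obtain V where "V \<in> \<V>" "y \<in> V" using y \<V>(2) by auto
    moreover from this have "V \<subseteq> Y closure_of V" by (simp add: \<V>(1) closure_of_subset openin_subset)
    ultimately show ?thesis by blast
  qed
  have open_nbhd: "openin Y (nbhd z)" if z: "z \<in> topspace Y" for z
  proof -
    have "closedin Y (\<Union>((\<lambda>V. Y closure_of V) ` {V\<in>\<V>. z \<notin> Y closure_of V}))"
      by (intro closedin_Union_locally_finite_closure locally_finite_in_subset[OF \<V>(3)]) auto
    then have "openin Y (topspace Y - \<Union>((\<lambda>V. Y closure_of V) ` {V\<in>\<V>. z \<notin> Y closure_of V}))"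
      by (simp add: openin_diff)
    moreover have "openin Y (\<Inter>(f ` {V\<in>\<V>. z \<in> Y closure_of V}))"
    proof (rule openin_Inter)
      obtain N where N: "openin Y N" "z \<in> N" "finite {V\<in>\<V>. V \<inter> N \<noteq> {}}"
        using \<V>(3) z unfolding locally_finite_in_def by blast
      moreover have "{V\<in>\<V>. z \<in> Y closure_of V} \<subseteq> {V\<in>\<V>. V \<inter> N \<noteq> {}}"
        using N openin_Int_closure_of_eq_empty by blast
      ultimately show "finite (f ` {V\<in>\<V>. z \<in> Y closure_of V})" using finite_subset by blast
      show "f ` {V\<in>\<V>. z \<in> Y closure_of V} \<noteq> {}" using in_closure[OF z] by blast
      show "\<And>W. W \<in> f ` {V\<in>\<V>. z \<in> Y closure_of V} \<Longrightarrow> openin Y W" using f opens by blast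
    qed
    ultimately show ?thesis unfolding nbhd_def by (rule openin_Int)
  qed
  show thesis
  proof (rule that[of "nbhd ` topspace Y"])
    show "\<forall>Q\<in>nbhd ` topspace Y. openin Y Q" using open_nbhd by blast
    have "z \<in> nbhd z" if "z \<in> topspace Y" for z using that f unfolding nbhd_def by blast
    then show "\<Union>(nbhd ` topspace Y) = topspace Y" using openin_subset[OF open_nbhd] by blast
    show "\<forall>y\<in>topspace Y. \<exists>W\<in>\<W>. star y (nbhd ` topspace Y) \<subseteq> W"
    proof
      fix y assume "y \<in> topspace Y"
      then obtain V where V: "V \<in> \<V>" "y \<in> Y closure_of V" using in_closure by blast
      have "nbhd z \<subseteq> f V" if "y \<in> nbhd z" for z
      proof -
        have "z \<in> Y closure_of V" using that V unfolding nbhd_def by blast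
        then show ?thesis using V unfolding nbhd_def by blast
      qed
      then show "\<exists>W\<in>\<W>. star y (nbhd ` topspace Y) \<subseteq> W"
        using f[OF V(1)] unfolding star_def by blast
    qed
  qed
qed

lemma paracompact_space_star_refinement:
  assumes "paracompact_space Y" "\<And>W. W \<in> \<W> \<Longrightarrow> openin Y W" "topspace Y \<subseteq> \<Union>\<W>"
  obtains \<O> where "\<forall>Q\<in>\<O>. openin Y Q" "\<Union>\<O> = topspace Y" "\<forall>y\<in>topspace Y. \<exists>W\<in>\<W>. star y \<O> \<subseteq> W"
proof -
  obtain \<V> where \<V>: "\<forall>V\<in>\<V>. openin Y V" "\<Union>\<V> = topspace Y" "locally_finite_in Y \<V>"
    "\<forall>V\<in>\<V>. \<exists>W\<in>\<W>. Y closure_of V \<subseteq> W"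
    by (rule paracompact_space_closure_refinement[OF assms])
  then obtain f where "\<And>V. V \<in> \<V> \<Longrightarrow> f V \<in> \<W> \<and> Y closure_of V \<subseteq> f V" by metis
  from locally_finite_closure_refinement_imp_star_refinement[OF assms(2) \<V>(1-3) this] that
  show thesis by blast
qed

definition evenly_covered :: "'a topology \<Rightarrow> 'b topology \<Rightarrow> ('a \<Rightarrow> 'b) \<Rightarrow> 'b set \<Rightarrow> 'a set set \<Rightarrow> bool" where
  "evenly_covered X Y p W \<U> \<longleftrightarrow> \<Union>\<U> = {x \<in> topspace X. p x \<in> W} \<and> (\<forall>U \<in> \<U>. openin X U) \<and>
     pairwise disjnt \<U> \<and> (\<forall>U \<in> \<U>. homeomorphic_map (subtopology X U) (subtopology Y W) p)"

lemma covering_map_evenly_covered_nbhd: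
  assumes "covering_map X Y p" "y \<in> topspace Y"
  obtains W \<U> where "openin Y W" "y \<in> W" "evenly_covered X Y p W \<U>"
  using assms unfolding covering_map_def evenly_covered_def by blast

lemma slice_iff_evenly_covered:
  "slice X Y p U \<longleftrightarrow> openin X U \<and> (\<exists>\<U>. U \<in> \<U> \<and> evenly_covered X Y p (p ` U) \<U>)"
  unfolding slice_def evenly_covered_def by blast

lemma evenly_covered_empty: "evenly_covered X Y p {} {}"
  by (simp add: evenly_covered_def)

lemma evenly_covered_image_sheet:
  assumes "evenly_covered X Y p W \<U>" "U \<in> \<U>" "W \<subseteq> topspace Y"
  shows "p ` U = W"
proof -
  have "homeomorphic_map (subtopology X U) (subtopology Y W) p" "U \<subseteq> topspace X"
    using assms(1,2) openin_subset unfolding evenly_covered_def by auto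
  then show ?thesis
    using homeomorphic_imp_surjective_map assms(3) by (fastforce simp: Int_absorb1)
qed

lemma evenly_covered_subset:
  assumes cover: "evenly_covered X Y p W \<U>" and "B \<subseteq> W" "openin Y B" "continuous_map X Y p"
  shows "evenly_covered X Y p B ((\<lambda>U. U \<inter> {x \<in> topspace X. p x \<in> B}) ` \<U>)"
  unfolding evenly_covered_def
proof (intro conjI ballI)
  let ?P = "{x \<in> topspace X. p x \<in> B}"
  show "\<Union>((\<lambda>U. U \<inter> ?P) ` \<U>) = ?P"
    using cover \<open>B \<subseteq> W\<close> unfolding evenly_covered_def by auto
  have "openin X ?P" using openin_continuous_map_preimage assms(3,4) by blast
  then show "openin X V" if "V \<in> (\<lambda>U. U \<inter> ?P) ` \<U>" for V
    using cover that unfolding evenly_covered_def by auto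
  show "pairwise disjnt ((\<lambda>U. U \<inter> ?P) ` \<U>)"
    using cover unfolding evenly_covered_def pairwise_def disjnt_def by blast
  show "homeomorphic_map (subtopology X V) (subtopology Y B) p" if V: "V \<in> (\<lambda>U. U \<inter> ?P) ` \<U>" for V
  proof -
    obtain U where "U \<in> \<U>" "V = U \<inter> ?P" using V by blast
    then have "homeomorphic_map (subtopology X U) (subtopology Y W) p"
      using cover unfolding evenly_covered_def by blast
    then have "homeomorphic_map (subtopology (subtopology X U) V) (subtopology (subtopology Y W) B) p"
      by (rule homeomorphic_map_subtopologies_alt) (auto simp: \<open>V = U \<inter> ?P\<close>)
    then show ?thesis using \<open>B \<subseteq> W\<close> \<open>V = U \<inter> ?P\<close> by (simp add: subtopology_subtopology Int_absorb1)
  qed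
qed

lemma connectedin_subset_sheet:
  assumes cover: "evenly_covered X Y p W \<U>" and "U \<in> \<U>" and "connectedin X C"
    and "C \<subseteq> {x \<in> topspace X. p x \<in> W}" and "x \<in> C" "x \<in> U"
  shows "C \<subseteq> U"
proof -
  have "openin X (\<Union>(\<U> - {U}))" "openin X U"
    using cover \<open>U \<in> \<U>\<close> unfolding evenly_covered_def by auto
  moreover have "disjnt U (\<Union>(\<U> - {U}))"
    using cover \<open>U \<in> \<U>\<close> unfolding evenly_covered_def pairwise_def disjnt_def by blast
  ultimately have "separatedin X U (\<Union>(\<U> - {U}))" by (simp add: separatedin_open_sets)
  moreover have "C \<subseteq> U \<union> \<Union>(\<U> - {U})" using cover assms(4) unfolding evenly_covered_def by blast
  ultimately have "C \<subseteq> U \<or> C \<subseteq> \<Union>(\<U> - {U})"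
    using connectedin_subset_separated_union \<open>connectedin X C\<close> by blast
  then show ?thesis using \<open>disjnt U (\<Union>(\<U> - {U}))\<close> \<open>x \<in> C\<close> \<open>x \<in> U\<close> by (auto simp: disjnt_def)
qed

lemma slice_if_subset_sheet:
  assumes cover: "evenly_covered X Y p W \<U>" and "U \<in> \<U>" and "Z \<subseteq> U" "openin X Z" "openin Y (p ` Z)"
    and "continuous_map X Y p"
  shows "slice X Y p Z"
proof -
  have hom: "homeomorphic_map (subtopology X U) (subtopology Y W) p"
    using cover \<open>U \<in> \<U>\<close> unfolding evenly_covered_def by blast
  have U: "U \<subseteq> topspace X" using cover \<open>U \<in> \<U>\<close> openin_subset unfolding evenly_covered_def by blast
  have "p ` U = topspace Y \<inter> W"
    using homeomorphic_imp_surjective_map[OF hom] U by (simp add: Int_absorb1)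
  then have "p ` Z \<subseteq> W" using \<open>Z \<subseteq> U\<close> by blast
  then have "evenly_covered X Y p (p ` Z) ((\<lambda>U. U \<inter> {x \<in> topspace X. p x \<in> p ` Z}) ` \<U>)"
    using evenly_covered_subset[OF cover] assms(5,6) by blast
  moreover have "Z = U \<inter> {x \<in> topspace X. p x \<in> p ` Z}"
  proof -
    have "inj_on p U" using homeomorphic_imp_injective_map[OF hom] U by (simp add: Int_absorb1)
    then show ?thesis using \<open>Z \<subseteq> U\<close> U by (blast dest: inj_onD)
  qed
  then have "Z \<in> (\<lambda>U. U \<inter> {x \<in> topspace X. p x \<in> p ` Z}) ` \<U>" using \<open>U \<in> \<U>\<close> by (rule image_eqI)
  ultimately show ?thesis
    unfolding slice_iff_evenly_covered using \<open>openin X Z\<close> by (intro conjI exI) simp_all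
qed

lemma connectedin_sheet:
  assumes "evenly_covered X Y p W \<U>" "U \<in> \<U>" "connectedin Y W"
  shows "connectedin X U"
proof -
  have hom: "homeomorphic_map (subtopology X U) (subtopology Y W) p" and U: "U \<subseteq> topspace X"
    using assms(1,2) openin_subset unfolding evenly_covered_def by blast+
  have "p ` U = W"
    using evenly_covered_image_sheet assms connectedin_subset_topspace by blast
  then have "connectedin (subtopology X U) U"
    using homeomorphic_map_connectedness_eq[OF hom, of U] U assms(3) by (simp add: connectedin_subtopology)
  then show ?thesis by (simp add: connectedin_subtopology)
qed

lemma covering_structure_Union_sheets:
  assumes "continuous_map X Y p" and "\<And>C. C \<in> \<C> \<Longrightarrow> openin Y C" and "topspace Y \<subseteq> \<Union>\<C>"
    and sheets: "\<And>C. C \<in> \<C> \<Longrightarrow> evenly_covered X Y p C (sh C)"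
  shows "covering_structure X Y p (\<Union>(sh ` \<C>))"
proof -
  have "\<Union>(\<Union>(sh ` \<C>)) = topspace X"
  proof
    have "\<Union>(sh C) \<subseteq> topspace X" if "C \<in> \<C>" for C
      using sheets[OF that] unfolding evenly_covered_def by blast
    then show "\<Union>(\<Union>(sh ` \<C>)) \<subseteq> topspace X" by blast
    show "topspace X \<subseteq> \<Union>(\<Union>(sh ` \<C>))"
    proof
      fix x assume x: "x \<in> topspace X"
      then have "p x \<in> topspace Y" using assms(1) by (auto simp: continuous_map_def Pi_iff)
      then obtain C where "C \<in> \<C>" "p x \<in> C" using assms(3) by blast
      then have "x \<in> \<Union>(sh C)" using sheets[OF \<open>C \<in> \<C>\<close>] x unfolding evenly_covered_def by blast
      then show "x \<in> \<Union>(\<Union>(sh ` \<C>))" using \<open>C \<in> \<C>\<close> by blast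
    qed
  qed
  moreover have sheet_props: "slice X Y p U \<and> (\<exists>\<U>\<subseteq>\<Union>(sh ` \<C>). \<Union>\<U> = {x \<in> topspace X. p x \<in> p ` U} \<and>
      pairwise disjnt \<U> \<and> (\<forall>W\<in>\<U>. homeomorphic_map (subtopology X W) (subtopology Y (p ` U)) p))"
    if U: "U \<in> \<Union>(sh ` \<C>)" for U
  proof -
    obtain C where C: "C \<in> \<C>" "U \<in> sh C" using U by blast
    have "openin X U" using sheets[OF C(1)] C(2) unfolding evenly_covered_def by blast
    have "p ` U = C"
      using evenly_covered_image_sheet[OF sheets[OF C(1)] C(2) openin_subset[OF assms(2)[OF C(1)]]] .
    then have "slice X Y p U"
      unfolding slice_iff_evenly_covered using \<open>openin X U\<close> sheets[OF C(1)] C(2) by auto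
    moreover have "sh C \<subseteq> \<Union>(sh ` \<C>)" using C(1) by blast
    ultimately show ?thesis
      using sheets[OF C(1)] unfolding \<open>p ` U = C\<close> evenly_covered_def by (intro conjI exI[of _ "sh C"]) auto
  qed
  ultimately show ?thesis unfolding covering_structure_def by (intro conjI ballI) (simp_all add: sheet_props)
qed

lemma locally_connected_space_connected_refinement:
  assumes "locally_connected_space Y" "\<forall>Q\<in>\<O>. openin Y Q" "\<Union>\<O> = topspace Y"
  shows "topspace Y \<subseteq> \<Union>{C. openin Y C \<and> connectedin Y C \<and> (\<exists>Q\<in>\<O>. C \<subseteq> Q)}"
proof
  fix y assume "y \<in> topspace Y"
  then obtain Q where "Q \<in> \<O>" "y \<in> Q" using assms(3) by blast
  then obtain C where "openin Y C" "connectedin Y C" "y \<in> C" "C \<subseteq> Q"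
    using assms(1,2) unfolding locally_connected_space by meson
  then show "y \<in> \<Union>{C. openin Y C \<and> connectedin Y C \<and> (\<exists>Q\<in>\<O>. C \<subseteq> Q)}" using \<open>Q \<in> \<O>\<close> by blast
qed

lemma overlay_if_stars_evenly_covered:
  assumes cm: "continuous_map X Y p"
    and opens: "\<And>C. C \<in> \<C> \<Longrightarrow> openin Y C" and conn: "\<And>C. C \<in> \<C> \<Longrightarrow> connectedin Y C"
    and cover: "topspace Y \<subseteq> \<Union>\<C>"
    and stars: "\<And>y. y \<in> topspace Y \<Longrightarrow> \<exists>W \<U>. evenly_covered X Y p W \<U> \<and> star y \<C> \<subseteq> W"
  shows "overlay X Y p"
proof -
  have "\<exists>\<U>. evenly_covered X Y p C \<U>" if C: "C \<in> \<C>" for C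
  proof (cases "C = {}")
    case True
    then show ?thesis using evenly_covered_empty by blast
  next
    case False
    then obtain y where "y \<in> C" by blast
    moreover have "C \<subseteq> topspace Y" by (rule openin_subset[OF opens[OF C]])
    ultimately obtain W \<U> where "evenly_covered X Y p W \<U>" "star y \<C> \<subseteq> W" using stars by blast
    moreover have "C \<subseteq> star y \<C>" using C \<open>y \<in> C\<close> unfolding star_def by blast
    ultimately show ?thesis using evenly_covered_subset[OF _ _ opens[OF C] cm] by blast
  qed
  then obtain sh where sh: "\<And>C. C \<in> \<C> \<Longrightarrow> evenly_covered X Y p C (sh C)" by metis
  define \<S> where "\<S> = \<Union>(sh ` \<C>)"
  have sheet: "openin X U \<and> p ` U \<in> \<C> \<and> connectedin X U" if "U \<in> \<S>" for U
  proof -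
    obtain C where C: "C \<in> \<C>" "U \<in> sh C" using \<open>U \<in> \<S>\<close> unfolding \<S>_def by blast
    have "p ` U = C"
      by (rule evenly_covered_image_sheet[OF sh[OF C(1)] C(2) openin_subset[OF opens[OF C(1)]]])
    moreover have "openin X U" using sh[OF C(1)] C(2) unfolding evenly_covered_def by blast
    ultimately show ?thesis using connectedin_sheet[OF sh[OF C(1)] C(2) conn[OF C(1)]] C(1) by simp
  qed
  have "slice X Y p (star x \<S>)" if x: "x \<in> topspace X" for x
  proof -
    have "p x \<in> topspace Y" using cm x by (auto simp: continuous_map_def Pi_iff)
    then obtain W \<U> where W: "evenly_covered X Y p W \<U>" "star (p x) \<C> \<subseteq> W" using stars by blast
    have "p x \<in> star (p x) \<C>" using cover \<open>p x \<in> topspace Y\<close> unfolding star_def by blast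
    then obtain U0 where U0: "U0 \<in> \<U>" "x \<in> U0" using W x unfolding evenly_covered_def by blast
    have "U \<subseteq> U0" if "U \<in> \<S>" "x \<in> U" for U
    proof (rule connectedin_subset_sheet[OF W(1) U0(1) _ _ \<open>x \<in> U\<close> U0(2)])
      show "connectedin X U" using sheet[OF \<open>U \<in> \<S>\<close>] by blast
      have "p ` U \<subseteq> star (p x) \<C>" using sheet[OF \<open>U \<in> \<S>\<close>] \<open>x \<in> U\<close> unfolding star_def by blast
      then show "U \<subseteq> {x \<in> topspace X. p x \<in> W}"
        using W(2) sheet[OF \<open>U \<in> \<S>\<close>] openin_subset by blast
    qed
    then have "star x \<S> \<subseteq> U0" unfolding star_def by blast
    moreover have "openin X (star x \<S>)" unfolding star_def using sheet by (intro openin_Union) blast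
    moreover have "openin Y (p ` star x \<S>)"
      unfolding star_def image_Union using sheet opens by (intro openin_Union) blast
    ultimately show ?thesis using slice_if_subset_sheet[OF W(1) U0(1) _ _ _ cm] by blast
  qed
  moreover have "covering_structure X Y p \<S>"
    unfolding \<S>_def by (rule covering_structure_Union_sheets[OF cm opens cover sh])
  ultimately show ?thesis unfolding overlay_def overlay_structure_def by blast
qed

theorem corollary4p8:
  fixes X :: "'a topology" and Y :: "'b topology" and p :: "'a \<Rightarrow> 'b"
  assumes "covering_map X Y p"
    and "locally_connected_space Y"
    and "paracompact_space Y"
  shows "overlay X Y p"
proof -
  define \<W> where "\<W> = {W. openin Y W \<and> (\<exists>\<U>. evenly_covered X Y p W \<U>)}"
  have "topspace Y \<subseteq> \<Union>\<W>"
    unfolding \<W>_def using covering_map_evenly_covered_nbhd[OF assms(1)] by blast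
  moreover have "\<And>W. W \<in> \<W> \<Longrightarrow> openin Y W" unfolding \<W>_def by blast
  ultimately obtain \<O> where \<O>: "\<forall>Q\<in>\<O>. openin Y Q" "\<Union>\<O> = topspace Y"
      "\<forall>y\<in>topspace Y. \<exists>W\<in>\<W>. star y \<O> \<subseteq> W"
    using paracompact_space_star_refinement[OF assms(3)] by metis
  define \<C> where "\<C> = {C. openin Y C \<and> connectedin Y C \<and> (\<exists>Q\<in>\<O>. C \<subseteq> Q)}"
  have "star y \<C> \<subseteq> star y \<O>" for y unfolding star_def \<C>_def by blast
  then have "\<exists>W \<U>. evenly_covered X Y p W \<U> \<and> star y \<C> \<subseteq> W" if "y \<in> topspace Y" for y
    using \<O>(3) that unfolding \<W>_def by blast
  moreover have "continuous_map X Y p" using assms(1) unfolding covering_map_def by (elim conjE)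
  moreover have "topspace Y \<subseteq> \<Union>\<C>"
    unfolding \<C>_def by (rule locally_connected_space_connected_refinement[OF assms(2) \<O>(1,2)])
  ultimately show ?thesis
    by (intro overlay_if_stars_evenly_covered[where \<C> = \<C>]) (auto simp: \<C>_def)
qed

end
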